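(* Let $K\ge 2$, $a\ge 1$, $b\ge 1$ be integers and $M\ge 0$. For the $(K,a,b)$ coded caching problem for location-based content with cache size $M$: if $K$ is even then $R^\star_{\rm u}\le 2R^\star$, and if $K$ is odd then $R^\star_{\rm u}\le 3R^\star$.
   Context: For integers $x\le y$, $[x:y]=\{x,x+1,\dots,y\}$ and $[n]=[1:n]$. For integers $c$ and $m\ge1$, $\langle c\rangle_m$ denotes the unique element of $\{1,\dots,m\}$ congruent to $c$ modulo $m$. The $(K,a,b)$ coded caching problem for location-based content: a server has $N=K(a+b)$ files $W_1,\dots,W_N$, each consisting of $B$ independent uniformly distributed bits (any subpacketization of files is allowed). There are $K$ cache nodes, each storing $MB$ bits, and $K$ users, user $k$ having free access to cache node $k$ only. For $k\in[K]$ define $\mathcal D_{k,1}=[(k-1)(a+b)+1:ka+(k-1)b]$, $\mathcal D_{k,2}=[ka+(k-1)b+1:k(a+b)]$, $\mathcal D_{k,3}=\mathcal D_{\langle k+1\rangle_K,1}$, and $\mathcal D_k=\mathcal D_{k,1}\cup\mathcal D_{k,2}\cup\mathcal D_{k,3}$. A scheme consists of: placement functions $Z_k=\phi_k(W_1,\dots,W_N)\in\{0,1\}^{MB}$ for $k\in[K]$, chosen without knowledge of demands; for every demand vector $\mathbf d=(d_1,\dots,d_K)\in\mathcal D_1\times\cdots\times\mathcal D_K$, a transmitted message $X=\psi(\mathbf d,W_1,\dots,W_N)\in\{0,1\}^{RB}$ broadcast to all users; and decoding functions such that, for every such $\mathbf d$ and every $k$, user $k$ recovers $W_{d_k}$ exactly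 from $(\mathbf d,Z_k,X)$. The number $R$ is the (worst-case) load of the scheme. The optimal load $R^\star$ is the infimum of $R$ over all schemes (and all $B$). The placement is uncoded if each $Z_k$ consists of a subset of the bits of the files copied directly; $R^\star_{\rm u}$ is the infimum of loads over schemes with uncoded placement. *)

theory Defs
  imports Complex_Main
begin

text \<open>Cyclic representative: the unique element of {1..m} congruent to c mod m.\<close>
definition cyc :: "int \<Rightarrow> int \<Rightarrow> int" where
  "cyc c m = (c - 1) mod m + 1"

definition nfiles :: "nat \<Rightarrow> nat \<Rightarrow> nat \<Rightarrow> nat" where
  "nfiles K a b = K * (a + b)"

definition Dk1 :: "nat \<Rightarrow> nat \<Rightarrow> nat \<Rightarrow> nat set" where
  "Dk1 a b k = {(k - 1) * (a + b) + 1 .. k * a + (k - 1) * b}"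

definition Dk2 :: "nat \<Rightarrow> nat \<Rightarrow> nat \<Rightarrow> nat set" where
  "Dk2 a b k = {k * a + (k - 1) * b + 1 .. k * (a + b)}"

definition Dk3 :: "nat \<Rightarrow> nat \<Rightarrow> nat \<Rightarrow> nat \<Rightarrow> nat set" where
  "Dk3 K a b k = Dk1 a b (nat (cyc (int k + 1) (int K)))"

definition Dem :: "nat \<Rightarrow> nat \<Rightarrow> nat \<Rightarrow> nat \<Rightarrow> nat set" where
  "Dem K a b k = Dk1 a b k \<union> Dk2 a b k \<union> Dk3 K a b k"

definition libs :: "nat \<Rightarrow> nat \<Rightarrow> (nat \<Rightarrow> bool list) set" where
  "libs N B = {w. \<forall>i. (i \<in> {1..N} \<longrightarrow> length (w i) = B) \<and> (i \<notin> {1..N} \<longrightarrow> w i = [])}"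

definition valid_scheme ::
  "nat \<Rightarrow> nat \<Rightarrow> nat \<Rightarrow> real \<Rightarrow> nat \<Rightarrow> nat \<Rightarrow> (nat \<Rightarrow> (nat \<Rightarrow> bool list) \<Rightarrow> bool list) \<Rightarrow> bool"
where
  "valid_scheme K a b M B L phi \<longleftrightarrow>
     B > 0 \<and>
     (\<forall>k\<in>{1..K}. \<exists>C::nat. real C \<le> M * real B \<and>
         (\<forall>w\<in>libs (nfiles K a b) B. length (phi k w) = C)) \<and>
     (\<exists>(psi :: (nat \<Rightarrow> nat) \<Rightarrow> (nat \<Rightarrow> bool list) \<Rightarrow> bool list)
        (dec :: nat \<Rightarrow> (nat \<Rightarrow> nat) \<Rightarrow> bool list \<Rightarrow> bool list \<Rightarrow> bool list).
        \<forall>d. (\<forall>k\<in>{1..K}. d k \<in> Dem K a b k) \<longrightarrow>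
          (\<forall>w\<in>libs (nfiles K a b) B.
              length (psi d w) = L \<and>
              (\<forall>k\<in>{1..K}. dec k d (phi k w) (psi d w) = w (d k))))"

text \<open>Uncoded placement: each cache is a fixed list of bits (file index, bit position) copied directly.\<close>
definition uncoded_placement ::
  "nat \<Rightarrow> nat \<Rightarrow> nat \<Rightarrow> nat \<Rightarrow> (nat \<Rightarrow> (nat \<Rightarrow> bool list) \<Rightarrow> bool list) \<Rightarrow> bool"
where
  "uncoded_placement K a b B phi \<longleftrightarrow>
     (\<exists>P :: nat \<Rightarrow> (nat \<times> nat) list. \<forall>k\<in>{1..K}.
        set (P k) \<subseteq> {1..nfiles K a b} \<times> {..<B} \<and>
        (\<forall>w\<in>libs (nfiles K a b) B. phi k w = map (\<lambda>(i, j). w i ! j) (P k)))"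

definition Rstar :: "nat \<Rightarrow> nat \<Rightarrow> nat \<Rightarrow> real \<Rightarrow> real" where
  "Rstar K a b M = Inf {real L / real B | B L. \<exists>phi. valid_scheme K a b M B L phi}"

definition Rstar_u :: "nat \<Rightarrow> nat \<Rightarrow> nat \<Rightarrow> real \<Rightarrow> real" where
  "Rstar_u K a b M = Inf {real L / real B | B L. \<exists>phi. valid_scheme K a b M B L phi \<and>
                                                      uncoded_placement K a b B phi}"

end

theory Submission
  imports Defs "HOL-Library.FuncSet"
begin

text \<open>An uncoded scheme attains load K * max(0, 1 - M/(2a+b)): a user may request at most 2a+b
  files, so its cache can hold the first M/(2a+b) fraction of each of them, and the server sends
  the remaining bits of every requested file. Conversely, pair the users as (2i+1, 2i+2): user 2i+1
  may request any of the 2a+b consecutive files D_{2i+1} \<union> D_{2i+2,1}, and these blocks are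
  disjoint. Letting the odd users run through their blocks in 2a+b demand vectors, their
  \<lfloor>K/2\<rfloor> caches and the 2a+b transmissions determine all \<lfloor>K/2\<rfloor>(2a+b) files of the blocks,
  so counting bits gives \<lfloor>K/2\<rfloor>(2a+b)B \<le> \<lfloor>K/2\<rfloor>MB + (2a+b)L, i.e.
  R* \<ge> \<lfloor>K/2\<rfloor> * max(0, 1 - M/(2a+b)). Finally K = 2\<lfloor>K/2\<rfloor> for even K and
  K \<le> 3\<lfloor>K/2\<rfloor> for odd K \<ge> 3.\<close>

lemma cyc_bounds: "0 < m \<Longrightarrow> 1 \<le> cyc c m \<and> cyc c m \<le> m"
  unfolding cyc_def by (smt (verit) pos_mod_bound pos_mod_sign)

lemma cyc_succ: "k < K \<Longrightarrow> cyc (int k + 1) (int K) = int k + 1"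
  unfolding cyc_def by simp

lemma card_Dk1_le: "card (Dk1 a b k) \<le> a"
  unfolding Dk1_def by (cases k) (auto simp: algebra_simps)

lemma card_Dk2_le: "card (Dk2 a b k) \<le> b"
  unfolding Dk2_def by (cases k) (auto simp: algebra_simps)

lemma finite_Dem: "finite (Dem K a b k)"
  unfolding Dem_def Dk1_def Dk2_def Dk3_def by auto

lemma card_Dem_le: "card (Dem K a b k) \<le> 2 * a + b"
proof -
  have "card (Dem K a b k) \<le> card (Dk1 a b k) + card (Dk2 a b k) + card (Dk3 K a b k)"
    unfolding Dem_def by (meson add_le_mono1 card_Un_le order_trans)
  then show ?thesis
    using card_Dk1_le[of a b k] card_Dk2_le[of a b k] card_Dk1_le[of a b "nat (cyc (int k + 1) (int K))"]
    unfolding Dk3_def by linarith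
qed

lemma Dk1_subset_files: "k \<in> {1..K} \<Longrightarrow> Dk1 a b k \<subseteq> {1..nfiles K a b}"
proof (cases k)
  case (Suc m)
  assume "k \<in> {1..K}"
  then have "k * a + m * b \<le> K * a + K * b"
    using Suc by (intro add_mono mult_le_mono1) auto
  then show ?thesis unfolding Dk1_def nfiles_def Suc by (auto simp: algebra_simps)
qed (simp add: Dk1_def)

lemma Dk2_subset_files: "k \<in> {1..K} \<Longrightarrow> Dk2 a b k \<subseteq> {1..nfiles K a b}"
  unfolding Dk2_def nfiles_def by (auto intro: order_trans[OF _ mult_le_mono1])

lemma Dem_subset_files: "k \<in> {1..K} \<Longrightarrow> Dem K a b k \<subseteq> {1..nfiles K a b}"
proof -
  assume k: "k \<in> {1..K}"
  then have "nat (cyc (int k + 1) (int K)) \<in> {1..K}"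
    using cyc_bounds[of "int K" "int k + 1"] by auto
  with k show ?thesis
    unfolding Dem_def Dk3_def using Dk1_subset_files Dk2_subset_files by blast
qed

lemma concat_eq_concat_imp_eq:
  "map length xs = map length ys \<Longrightarrow> concat xs = concat ys \<Longrightarrow> xs = ys"
proof (induction xs arbitrary: ys)
  case (Cons x xs)
  then show ?case by (cases ys) auto
qed simp

lemma card_le_two_pow_if_inj_on:
  fixes h :: "'a \<Rightarrow> bool list"
  assumes "inj_on h A" and "\<And>x. x \<in> A \<Longrightarrow> length (h x) = n"
  shows "card A \<le> 2 ^ n"
proof -
  have "card A \<le> card {xs :: bool list. length xs = n}"
    using assms finite_lists_length_eq[of "UNIV :: bool set" n] by (intro card_inj_on_le) auto
  also have "\<dots> = 2 ^ n"
    using card_lists_length_eq[of "UNIV :: bool set" n] by simp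
  finally show ?thesis .
qed

lemma card_le_two_pow_if_inj_on_lists:
  fixes obs :: "'a \<Rightarrow> bool list list"
  assumes "inj_on obs A" and "\<And>x. x \<in> A \<Longrightarrow> map length (obs x) = ns"
  shows "card A \<le> 2 ^ sum_list ns"
proof (rule card_le_two_pow_if_inj_on)
  show "inj_on (concat \<circ> obs) A"
  proof (rule inj_onI)
    fix x y assume x: "x \<in> A" and y: "y \<in> A" and "(concat \<circ> obs) x = (concat \<circ> obs) y"
    then have "obs x = obs y"
      using assms(2) by (intro concat_eq_concat_imp_eq) simp_all
    with assms(1) x y show "x = y" by (blast dest: inj_onD)
  qed
  show "length ((concat \<circ> obs) x) = sum_list ns" if "x \<in> A" for x
    using assms(2)[OF that] by (simp add: length_concat)
qed

lemma card_PiE_bool_lists: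
  "finite S \<Longrightarrow> card (PiE S (\<lambda>_. {xs :: bool list. length xs = n})) = 2 ^ (n * card S)"
  using card_lists_length_eq[of "UNIV :: bool set" n] by (simp add: card_PiE power_mult)

lemma decoder_exists:
  assumes "\<And>d k w w'. Q d \<Longrightarrow> k \<in> I \<Longrightarrow> w \<in> A \<Longrightarrow> w' \<in> A \<Longrightarrow>
      phi k w = phi k w' \<Longrightarrow> psi d w = psi d w' \<Longrightarrow> w (d k) = w' (d k)"
  shows "\<exists>dec. \<forall>d. Q d \<longrightarrow> (\<forall>w\<in>A. \<forall>k\<in>I. dec k d (phi k w) (psi d w) = w (d k))"
proof -
  define dec where "dec k d z x = (SOME y. \<exists>w\<in>A. phi k w = z \<and> psi d w = x \<and> y = w (d k))"
    for k d z x
  have "dec k d (phi k w) (psi d w) = w (d k)" if "Q d" "w \<in> A" "k \<in> I" for d w k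
    unfolding dec_def by (rule someI2[where a = "w (d k)"]) (use assms that in blast)+
  then show ?thesis by blast
qed

definition cached_bits :: "nat \<Rightarrow> nat \<Rightarrow> nat \<Rightarrow> nat \<Rightarrow> nat \<Rightarrow> (nat \<times> nat) list" where
  "cached_bits K a b c k =
     concat (map (\<lambda>f. map (Pair f) [0..<c]) (sorted_list_of_set (Dem K a b k)))"

definition uncoded_cache ::
  "nat \<Rightarrow> nat \<Rightarrow> nat \<Rightarrow> nat \<Rightarrow> nat \<Rightarrow> (nat \<Rightarrow> bool list) \<Rightarrow> bool list" where
  "uncoded_cache K a b c k w = map (\<lambda>(i, j). w i ! j) (cached_bits K a b c k)"

definition uncoded_delivery :: "nat \<Rightarrow> nat \<Rightarrow> (nat \<Rightarrow> nat) \<Rightarrow> (nat \<Rightarrow> bool list) \<Rightarrow> bool list" where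
  "uncoded_delivery K c d w = concat (map (\<lambda>k. drop c (w (d k))) [1..<Suc K])"

lemma set_cached_bits: "set (cached_bits K a b c k) = Dem K a b k \<times> {..<c}"
  unfolding cached_bits_def using finite_Dem by auto

lemma length_uncoded_cache: "length (uncoded_cache K a b c k w) = c * card (Dem K a b k)"
  by (simp add: uncoded_cache_def cached_bits_def length_concat o_def sum_list_triv)

lemma uncoded_placement_uncoded_cache:
  assumes "c \<le> B"
  shows "uncoded_placement K a b B (uncoded_cache K a b c)"
  unfolding uncoded_placement_def
proof (intro exI[of _ "cached_bits K a b c"] ballI conjI)
  fix k assume "k \<in> {1..K}"
  show "set (cached_bits K a b c k) \<subseteq> {1..nfiles K a b} \<times> {..<B}"
    using Dem_subset_files[OF \<open>k \<in> {1..K}\<close>] assms by (auto simp: set_cached_bits)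
qed (simp add: uncoded_cache_def)

lemma length_uncoded_delivery:
  assumes "\<And>k. k \<in> {1..K} \<Longrightarrow> length (w (d k)) = B"
  shows "length (uncoded_delivery K c d w) = K * (B - c)"
proof -
  have "length (uncoded_delivery K c d w) = (\<Sum>k = 1..<Suc K. length (w (d k)) - c)"
    by (simp add: uncoded_delivery_def length_concat o_def interv_sum_list_conv_sum_set_nat del: upt_Suc)
  also have "\<dots> = (\<Sum>k = 1..<Suc K. B - c)"
    using assms by (intro sum.cong) auto
  finally show ?thesis by simp
qed

lemma uncoded_delivery_determines_demand:
  assumes k: "k \<in> {1..K}" and dk: "d k \<in> Dem K a b k"
    and len: "\<And>k. k \<in> {1..K} \<Longrightarrow> length (w (d k)) = B \<and> length (w' (d k)) = B"
    and cache: "uncoded_cache K a b c k w = uncoded_cache K a b c k w'"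
    and delivery: "uncoded_delivery K c d w = uncoded_delivery K c d w'"
  shows "w (d k) = w' (d k)"
proof -
  have "map (\<lambda>k. drop c (w (d k))) [1..<Suc K] = map (\<lambda>k. drop c (w' (d k))) [1..<Suc K]"
    using delivery len unfolding uncoded_delivery_def
    by (intro concat_eq_concat_imp_eq) (auto simp: o_def del: upt_Suc)
  then have drop_eq: "drop c (w (d k)) = drop c (w' (d k))"
    using k by (simp del: upt_Suc)
  have "w (d k) ! j = w' (d k) ! j" if "j < c" for j
    using cache dk that unfolding uncoded_cache_def
    by (auto simp: set_cached_bits)
  then have "take c (w (d k)) = take c (w' (d k))"
    using len[OF k] by (intro nth_equalityI) auto
  with drop_eq show ?thesis by (metis append_take_drop_id)
qed

lemma uncoded_scheme_valid:
  assumes B: "0 < B" and cB: "c \<le> B" and cM: "real (c * (2 * a + b)) \<le> M * real B"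
  shows "valid_scheme K a b M B (K * (B - c)) (uncoded_cache K a b c)"
proof -
  let ?admissible = "\<lambda>d. \<forall>k\<in>{1..K}. d k \<in> Dem K a b k"
  let ?Lib = "libs (nfiles K a b) B"
  have len: "length (w (d k)) = B" if "?admissible d" "w \<in> ?Lib" "k \<in> {1..K}" for d w k
    using that Dem_subset_files unfolding libs_def by blast
  have "w (d k) = w' (d k)"
    if "?admissible d" "k \<in> {1..K}" "w \<in> ?Lib" "w' \<in> ?Lib"
      "uncoded_cache K a b c k w = uncoded_cache K a b c k w'"
      "uncoded_delivery K c d w = uncoded_delivery K c d w'" for d k w w'
    using that len by (intro uncoded_delivery_determines_demand[of k K d a b _ B]) auto
  then have "\<exists>dec. \<forall>d. ?admissible d \<longrightarrow> (\<forall>w\<in>?Lib. \<forall>k\<in>{1..K}.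
      dec k d (uncoded_cache K a b c k w) (uncoded_delivery K c d w) = w (d k))"
    by (rule decoder_exists)
  then obtain dec where dec: "\<forall>d. ?admissible d \<longrightarrow> (\<forall>w\<in>?Lib. \<forall>k\<in>{1..K}.
      dec k d (uncoded_cache K a b c k w) (uncoded_delivery K c d w) = w (d k))" ..
  have cache_size: "real (c * card (Dem K a b k)) \<le> M * real B" for k
    using cM card_Dem_le[of K a b k] by (meson mult_le_mono2 of_nat_le_iff order_trans)
  have delivery_size: "length (uncoded_delivery K c d w) = K * (B - c)"
    if "?admissible d" "w \<in> ?Lib" for d w
    using len[OF that] by (rule length_uncoded_delivery)
  have caches: "\<forall>k\<in>{1..K}. \<exists>C. real C \<le> M * real B \<and>
      (\<forall>w\<in>?Lib. length (uncoded_cache K a b c k w) = C)"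
    using cache_size by (auto simp: length_uncoded_cache simp del: of_nat_mult)
  have deliveries: "\<forall>d. ?admissible d \<longrightarrow> (\<forall>w\<in>?Lib. length (uncoded_delivery K c d w) = K * (B - c)
      \<and> (\<forall>k\<in>{1..K}. dec k d (uncoded_cache K a b c k w) (uncoded_delivery K c d w) = w (d k)))"
    using dec delivery_size by blast
  show ?thesis
    unfolding valid_scheme_def
    by (intro conjI exI[of _ "uncoded_delivery K c"] exI[of _ dec] B caches deliveries)
qed

definition block_file :: "nat \<Rightarrow> nat \<Rightarrow> nat \<Rightarrow> nat \<Rightarrow> nat" where
  "block_file a b i j = 2 * i * (a + b) + j + 1"

text \<open>The j-th demand vector of the converse: every odd user k < K requests the j-th file of
  D_{k,1} \<union> D_{k,2} \<union> D_{k+1,1}, all other users their first file.\<close>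
definition block_demand :: "nat \<Rightarrow> nat \<Rightarrow> nat \<Rightarrow> nat \<Rightarrow> nat \<Rightarrow> nat" where
  "block_demand K a b j k = (k - 1) * (a + b) + 1 + (if odd k \<and> k < K then j else 0)"

definition block_files :: "nat \<Rightarrow> nat \<Rightarrow> nat \<Rightarrow> nat set" where
  "block_files K a b = (\<lambda>(i, j). block_file a b i j) ` ({..<K div 2} \<times> {..<2 * a + b})"

definition zero_padded :: "nat \<Rightarrow> nat \<Rightarrow> nat set \<Rightarrow> (nat \<Rightarrow> bool list) \<Rightarrow> nat \<Rightarrow> bool list" where
  "zero_padded N B S f x = (if x \<in> S then f x else if x \<in> {1..N} then replicate B False else [])"

lemma block_demand_admissible:
  assumes "1 \<le> a" and "j < 2 * a + b" and "k \<in> {1..K}"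
  shows "block_demand K a b j k \<in> Dem K a b k"
proof -
  obtain m where m: "k = Suc m" using assms(3) by (cases k) auto
  show ?thesis
  proof (cases "odd k \<and> k < K")
    case True
    then have bd: "block_demand K a b j k = m * (a + b) + 1 + j"
      unfolding block_demand_def m by simp
    have next_user: "nat (cyc (int k + 1) (int K)) = Suc (Suc m)"
      using True cyc_succ[of k K] m by simp
    consider "j < a" | "a \<le> j" "j < a + b" | "a + b \<le> j" by linarith
    then show ?thesis
    proof cases
      case 1
      then have "block_demand K a b j k \<in> Dk1 a b k"
        using bd unfolding Dk1_def m by (simp add: algebra_simps)
      then show ?thesis unfolding Dem_def by blast
    next
      case 2
      then have "block_demand K a b j k \<in> Dk2 a b k"
        using bd unfolding Dk2_def m by (simp add: algebra_simps)
      then show ?thesis unfolding Dem_def by blast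
    next
      case 3
      then have "block_demand K a b j k \<in> Dk1 a b (Suc (Suc m))"
        using assms(2) bd unfolding Dk1_def m by (simp add: algebra_simps)
      then have "block_demand K a b j k \<in> Dk3 K a b k"
        unfolding Dk3_def next_user .
      then show ?thesis unfolding Dem_def by blast
    qed
  next
    case False
    then have "block_demand K a b j k \<in> Dk1 a b k"
      using assms(1) unfolding block_demand_def Dk1_def m by (auto simp: algebra_simps)
    then show ?thesis unfolding Dem_def by blast
  qed
qed

lemma block_demand_odd_user: "2 * i + 1 < K \<Longrightarrow> block_demand K a b j (2 * i + 1) = block_file a b i j"
  unfolding block_demand_def block_file_def by simp

lemma inj_on_block_file:
  assumes "1 \<le> b"
  shows "inj_on (\<lambda>(i, j). block_file a b i j) (UNIV \<times> {..<2 * a + b})"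
proof (rule inj_onI, clarify)
  fix i j i' j'
  assume "j < 2 * a + b" "j' < 2 * a + b" and eq: "block_file a b i j = block_file a b i' j'"
  define P where "P = 2 * (a + b)"
  have j: "j < P" and j': "j' < P" using assms \<open>j < 2 * a + b\<close> \<open>j' < 2 * a + b\<close>
    unfolding P_def by simp_all
  have n: "i * P + j = i' * P + j'"
    using eq unfolding block_file_def P_def by (simp add: algebra_simps)
  have "(i * P + j) div P = i" "(i * P + j) mod P = j" using j by simp_all
  moreover have "(i' * P + j') div P = i'" "(i' * P + j') mod P = j'" using j' by simp_all
  ultimately show "i = i' \<and> j = j'" using n by metis
qed

lemma card_block_files: "1 \<le> b \<Longrightarrow> card (block_files K a b) = K div 2 * (2 * a + b)"
  unfolding block_files_def
  by (subst card_image) (auto intro: inj_on_subset[OF inj_on_block_file] simp: card_cartesian_product)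

lemma block_files_subset_files: "block_files K a b \<subseteq> {1..nfiles K a b}"
proof
  fix x assume "x \<in> block_files K a b"
  then obtain i j where i: "i < K div 2" and j: "j < 2 * a + b" and x: "x = block_file a b i j"
    unfolding block_files_def by auto
  have "x \<le> 2 * (i + 1) * (a + b)"
    using j unfolding x block_file_def by (simp add: algebra_simps)
  also have "\<dots> \<le> 2 * (K div 2) * (a + b)"
    using i by (intro mult_le_mono1) simp
  also have "\<dots> \<le> nfiles K a b"
    unfolding nfiles_def by (intro mult_le_mono1) simp
  finally show "x \<in> {1..nfiles K a b}"
    by (simp add: x block_file_def)
qed

lemma zero_padded_in_libs:
  "S \<subseteq> {1..N} \<Longrightarrow> f \<in> S \<rightarrow>\<^sub>E {xs. length xs = B} \<Longrightarrow> zero_padded N B S f \<in> libs N B"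
  unfolding libs_def zero_padded_def by auto

definition block_observations :: "nat \<Rightarrow> nat \<Rightarrow> nat \<Rightarrow> nat \<Rightarrow>
    (nat \<Rightarrow> (nat \<Rightarrow> bool list) \<Rightarrow> bool list) \<Rightarrow> ((nat \<Rightarrow> nat) \<Rightarrow> (nat \<Rightarrow> bool list) \<Rightarrow> bool list) \<Rightarrow>
    (nat \<Rightarrow> bool list) \<Rightarrow> bool list list" where
  "block_observations K a b B phi psi f =
    (let w = zero_padded (nfiles K a b) B (block_files K a b) f in
      map (\<lambda>i. phi (2 * i + 1) w) [0..<K div 2] @ map (\<lambda>j. psi (block_demand K a b j) w) [0..<2 * a + b])"

lemma block_files_determined:
  fixes K a b B :: nat
    and phi :: "nat \<Rightarrow> (nat \<Rightarrow> bool list) \<Rightarrow> bool list"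
    and psi :: "(nat \<Rightarrow> nat) \<Rightarrow> (nat \<Rightarrow> bool list) \<Rightarrow> bool list"
  defines "N \<equiv> nfiles K a b" and "S \<equiv> block_files K a b"
  assumes dec: "\<forall>d. (\<forall>k\<in>{1..K}. d k \<in> Dem K a b k) \<longrightarrow>
      (\<forall>w\<in>libs N B. \<forall>k\<in>{1..K}. dec k d (phi k w) (psi d w) = w (d k))"
    and a: "1 \<le> a"
    and f: "f \<in> S \<rightarrow>\<^sub>E {xs. length xs = B}" and g: "g \<in> S \<rightarrow>\<^sub>E {xs. length xs = B}"
    and caches: "\<And>i. i < K div 2 \<Longrightarrow>
      phi (2 * i + 1) (zero_padded N B S f) = phi (2 * i + 1) (zero_padded N B S g)"
    and transmissions: "\<And>j. j < 2 * a + b \<Longrightarrow>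
      psi (block_demand K a b j) (zero_padded N B S f) = psi (block_demand K a b j) (zero_padded N B S g)"
  shows "f = g"
proof (rule PiE_ext[OF f g])
  fix x assume "x \<in> S"
  then obtain i j where i: "i < K div 2" and j: "j < 2 * a + b" and x: "x = block_file a b i j"
    unfolding S_def block_files_def by auto
  have "2 * i + 1 < K" using i by linarith
  define k where "k = 2 * i + 1"
  have k: "k \<in> {1..K}" using \<open>2 * i + 1 < K\<close> unfolding k_def by simp
  have x_demand: "block_demand K a b j k = x"
    unfolding k_def x using \<open>2 * i + 1 < K\<close> by (rule block_demand_odd_user)
  have admissible: "block_demand K a b j k' \<in> Dem K a b k'" if "k' \<in> {1..K}" for k'
    using a j that by (rule block_demand_admissible)
  have decode: "dec k (block_demand K a b j) (phi k w) (psi (block_demand K a b j) w) = w x"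
    if "w \<in> libs N B" for w
    using dec[rule_format, of "block_demand K a b j", OF admissible that k] unfolding x_demand .
  have libs: "zero_padded N B S f \<in> libs N B" "zero_padded N B S g \<in> libs N B"
    using zero_padded_in_libs[OF block_files_subset_files] f g unfolding N_def S_def by simp_all
  have "f x = zero_padded N B S f x"
    using \<open>x \<in> S\<close> by (simp add: zero_padded_def)
  also have "\<dots> = dec k (block_demand K a b j) (phi k (zero_padded N B S f))
      (psi (block_demand K a b j) (zero_padded N B S f))"
    using decode[OF libs(1)] by simp
  also have "\<dots> = dec k (block_demand K a b j) (phi k (zero_padded N B S g))
      (psi (block_demand K a b j) (zero_padded N B S g))"
    using caches[OF i] transmissions[OF j] unfolding k_def by simp
  also have "\<dots> = zero_padded N B S g x"
    using decode[OF libs(2)] .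
  also have "\<dots> = g x"
    using \<open>x \<in> S\<close> by (simp add: zero_padded_def)
  finally show "f x = g x" .
qed

lemma inj_on_block_observations:
  assumes dec: "\<forall>d. (\<forall>k\<in>{1..K}. d k \<in> Dem K a b k) \<longrightarrow>
      (\<forall>w\<in>libs (nfiles K a b) B. \<forall>k\<in>{1..K}. dec k d (phi k w) (psi d w) = w (d k))"
    and a: "1 \<le> a"
  shows "inj_on (block_observations K a b B phi psi) (block_files K a b \<rightarrow>\<^sub>E {xs. length xs = B})"
proof (rule inj_onI)
  fix f g
  let ?w = "zero_padded (nfiles K a b) B (block_files K a b)"
  assume f: "f \<in> block_files K a b \<rightarrow>\<^sub>E {xs. length xs = B}"
    and g: "g \<in> block_files K a b \<rightarrow>\<^sub>E {xs. length xs = B}"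
    and "block_observations K a b B phi psi f = block_observations K a b B phi psi g"
  then have "map (\<lambda>i. phi (2 * i + 1) (?w f)) [0..<K div 2] =
      map (\<lambda>i. phi (2 * i + 1) (?w g)) [0..<K div 2] \<and>
    map (\<lambda>j. psi (block_demand K a b j) (?w f)) [0..<2 * a + b] =
      map (\<lambda>j. psi (block_demand K a b j) (?w g)) [0..<2 * a + b]"
    unfolding block_observations_def Let_def by (subst (asm) append_eq_append_conv) auto
  then show "f = g"
    by (intro block_files_determined[OF dec a f g]) simp_all
qed

lemma cut_set_bound:
  assumes a: "1 \<le> a" and b: "1 \<le> b" and V: "valid_scheme K a b M B L phi"
  shows "real (K div 2) * real (2 * a + b) * real B
    \<le> real (K div 2) * M * real B + real (2 * a + b) * real L"
proof -
  define N where "N = nfiles K a b"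
  define S where "S = block_files K a b"
  define s where "s = K div 2"
  define t where "t = 2 * a + b"
  obtain C where C_le: "\<And>k. k \<in> {1..K} \<Longrightarrow> real (C k) \<le> M * real B"
    and C_len: "\<And>k w. k \<in> {1..K} \<Longrightarrow> w \<in> libs N B \<Longrightarrow> length (phi k w) = C k"
    using V unfolding valid_scheme_def N_def by metis
  obtain psi :: "(nat \<Rightarrow> nat) \<Rightarrow> (nat \<Rightarrow> bool list) \<Rightarrow> bool list"
    and dec :: "nat \<Rightarrow> (nat \<Rightarrow> nat) \<Rightarrow> bool list \<Rightarrow> bool list \<Rightarrow> bool list"
    where psi: "\<forall>d. (\<forall>k\<in>{1..K}. d k \<in> Dem K a b k) \<longrightarrow> (\<forall>w\<in>libs N B.
      length (psi d w) = L \<and> (\<forall>k\<in>{1..K}. dec k d (phi k w) (psi d w) = w (d k)))"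
    using V unfolding valid_scheme_def N_def by blast
  define A where "A = S \<rightarrow>\<^sub>E {xs :: bool list. length xs = B}"
  have odd_user: "2 * i + 1 \<in> {1..K}" if "i < s" for i
  proof -
    have "2 * i + 1 < K" using that unfolding s_def by linarith
    then show ?thesis by simp
  qed
  have lengths: "map length (block_observations K a b B phi psi f) =
      map (\<lambda>i. C (2 * i + 1)) [0..<s] @ replicate t L" if "f \<in> A" for f
  proof -
    have w: "zero_padded N B S f \<in> libs N B"
      using zero_padded_in_libs[OF block_files_subset_files] that unfolding A_def N_def S_def .
    then have "length (psi (block_demand K a b j) (zero_padded N B S f)) = L" if "j < t" for j
      using psi block_demand_admissible[OF a] that unfolding t_def by blast
    then have "map (\<lambda>j. length (psi (block_demand K a b j) (zero_padded N B S f))) [0..<t]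
        = replicate t L"
      by (simp add: list_eq_iff_nth_eq)
    then show ?thesis
      using C_len[OF odd_user w] unfolding block_observations_def N_def S_def s_def t_def
      by (simp add: o_def Let_def)
  qed
  have "inj_on (block_observations K a b B phi psi) A"
    using psi unfolding A_def S_def N_def by (intro inj_on_block_observations[of K a b B dec, OF _ a]) blast
  then have "card A \<le> 2 ^ sum_list (map (\<lambda>i. C (2 * i + 1)) [0..<s] @ replicate t L)"
    using lengths by (rule card_le_two_pow_if_inj_on_lists)
  moreover have "card A = 2 ^ (B * (s * t))"
    unfolding A_def S_def s_def t_def
    by (simp add: card_PiE_bool_lists card_block_files[OF b]
      finite_subset[OF block_files_subset_files])
  ultimately have "B * (s * t) \<le> (\<Sum>i<s. C (2 * i + 1)) + t * L"
    by (simp add: interv_sum_list_conv_sum_set_nat atLeast0LessThan sum_list_replicate)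
  then have "real B * (real s * real t) \<le> (\<Sum>i<s. real (C (2 * i + 1))) + real t * real L"
    by (metis of_nat_add of_nat_le_iff of_nat_mult of_nat_sum)
  also have "(\<Sum>i<s. real (C (2 * i + 1))) \<le> real s * (M * real B)"
    using sum_bounded_above[of "{..<s}" "\<lambda>i. real (C (2 * i + 1))"] C_le odd_user by simp
  finally show ?thesis
    unfolding s_def t_def by (simp add: algebra_simps)
qed

lemma le_of_le_add_div_nat:
  fixes x y c :: real
  assumes "\<And>n :: nat. 0 < n \<Longrightarrow> x \<le> y + c / real n"
  shows "x \<le> y"
proof (rule field_le_epsilon)
  fix e :: real assume e: "0 < e"
  obtain n :: nat where n: "max 1 (c / e) < real n"
    using reals_Archimedean2 by blast
  then have "0 < n" by simp
  have "c < real n * e"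
    using n e by (simp add: divide_less_eq mult.commute)
  then have "c / real n < e"
    using \<open>0 < n\<close> by (simp add: divide_less_eq mult.commute)
  with assms[OF \<open>0 < n\<close>] show "x \<le> y + e" by linarith
qed

lemma Rstar_lower_bound:
  assumes a: "1 \<le> a" and b: "1 \<le> b" and M: "0 \<le> M"
  shows "real (K div 2) * max 0 (1 - M / real (2 * a + b)) \<le> Rstar K a b M"
  unfolding Rstar_def
proof (rule cInf_greatest)
  have "valid_scheme K a b M 1 (K * (1 - 0)) (uncoded_cache K a b 0)"
    using M by (intro uncoded_scheme_valid) simp_all
  then show "{real L / real B |B L. \<exists>phi. valid_scheme K a b M B L phi} \<noteq> {}"
    by blast
next
  fix x assume "x \<in> {real L / real B |B L. \<exists>phi. valid_scheme K a b M B L phi}"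
  then obtain B L phi where x: "x = real L / real B" and V: "valid_scheme K a b M B L phi"
    by blast
  have B: "0 < B" using V unfolding valid_scheme_def by blast
  have t: "0 < real (2 * a + b)" using a by simp
  have "real (K div 2) * (1 - M / real (2 * a + b)) * real B \<le> real L"
    using cut_set_bound[OF a b V] t by (simp add: field_simps)
  then have "real (K div 2) * (1 - M / real (2 * a + b)) \<le> x"
    unfolding x using B by (simp add: field_simps)
  moreover have "0 \<le> x" unfolding x by simp
  ultimately show "real (K div 2) * max 0 (1 - M / real (2 * a + b)) \<le> x"
    by (simp add: max_mult_distrib_left[symmetric] max_def)
qed

lemma Rstar_u_upper_bound:
  assumes M: "0 \<le> M"
  shows "Rstar_u K a b M \<le> real K * max 0 (1 - M / real (2 * a + b))"
proof -
  define t where "t = real (2 * a + b)"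
  define U where "U = {real L / real B |B L. \<exists>phi. valid_scheme K a b M B L phi \<and>
    uncoded_placement K a b B phi}"
  have U_lower: "Rstar_u K a b M \<le> real (K * (B - c)) / real B"
    if "0 < B" "c \<le> B" "real c * t \<le> M * real B" for B c
  proof -
    have "real (K * (B - c)) / real B \<in> U"
      using uncoded_scheme_valid[of B c a b M K] uncoded_placement_uncoded_cache[of c B K a b] that
      unfolding U_def t_def by (metis (mono_tags, lifting) mem_Collect_eq of_nat_mult)
    moreover have "bdd_below U"
      unfolding U_def by (rule bdd_belowI[of _ 0]) auto
    ultimately show ?thesis
      unfolding Rstar_u_def U_def[symmetric] by (rule cInf_lower)
  qed
  show ?thesis
  proof (cases "M < t")
    case True
    then have t: "0 < t" using M by linarith
    have "Rstar_u K a b M \<le> real K * (1 - M / t)"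
    proof (rule le_of_le_add_div_nat)
      fix B :: nat assume B: "0 < B"
      define c where "c = nat \<lfloor>M * real B / t\<rfloor>"
      have c_le: "real c \<le> M * real B / t" and c_gt: "M * real B / t - 1 < real c"
        unfolding c_def using M t by (simp_all add: of_nat_nat)
      have "M * real B / t < real B" using True B t by (simp add: divide_less_eq)
      then have cB: "c \<le> B" using c_le by linarith
      have "Rstar_u K a b M \<le> real (K * (B - c)) / real B"
        using c_le t by (intro U_lower[OF B cB]) (simp add: field_simps)
      also have "\<dots> = real K * (real B - real c) / real B"
        using cB by (simp add: of_nat_diff)
      also have "\<dots> \<le> real K * (real B - (M * real B / t - 1)) / real B"
        using c_gt by (intro divide_right_mono mult_left_mono) auto
      also have "\<dots> = real K * (1 - M / t) + real K / real B"
        using B t by (simp add: field_simps)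
      finally show "Rstar_u K a b M \<le> real K * (1 - M / t) + real K / real B" .
    qed
    moreover have "max 0 (1 - M / t) = 1 - M / t"
      using True t by simp
    ultimately show ?thesis unfolding t_def by simp
  next
    case False
    then have "Rstar_u K a b M \<le> real (K * (1 - 1)) / real (1 :: nat)"
      by (intro U_lower) simp_all
    then have "Rstar_u K a b M \<le> 0" by simp
    moreover have "0 \<le> real K * max 0 (1 - M / t)" by simp
    ultimately show ?thesis unfolding t_def by linarith
  qed
qed

theorem theorem2:
  fixes K a b :: nat and M :: real
  assumes "K \<ge> 2" and "a \<ge> 1" and "b \<ge> 1" and "M \<ge> 0"
  shows "(even K \<longrightarrow> Rstar_u K a b M \<le> 2 * Rstar K a b M) \<and>
         (odd K \<longrightarrow> Rstar_u K a b M \<le> 3 * Rstar K a b M)"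
proof -
  define m where "m = max 0 (1 - M / real (2 * a + b))"
  have m: "0 \<le> m" unfolding m_def by simp
  have upper: "Rstar_u K a b M \<le> real K * m"
    unfolding m_def using assms(4) by (rule Rstar_u_upper_bound)
  have lower: "real (K div 2) * m \<le> Rstar K a b M"
    unfolding m_def using assms(2-4) by (rule Rstar_lower_bound)
  have "even K \<Longrightarrow> real K = 2 * real (K div 2)" by auto
  moreover have "odd K \<Longrightarrow> real K \<le> 3 * real (K div 2)"
    using assms(1) by (auto elim!: oddE)
  ultimately have "even K \<longrightarrow> real K * m \<le> 2 * (real (K div 2) * m)"
    and "odd K \<longrightarrow> real K * m \<le> 3 * (real (K div 2) * m)"
    using m by (simp_all add: mult_right_mono flip: mult.assoc)
  then show ?thesis
    using upper lower by auto
qed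

end
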